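(* Consider the eigenvalue problem $-u^{(6)}(x)=\lambda u(x)$ for $x\in[0,1]$, with $u(0)=u'(0)=u''(0)=0$ and $u(1)=u'(1)=u''(1)=0$. Its eigenvalues, listed in increasing order, can be indexed as $\{\lambda_{n,3}\}_{n=2}^\infty$ so that $$\lambda_{n,3}=(n\pi)^6 \quad\text{if } n\ge 2 \text{ is even},\qquad \lambda_{n,3}=(n\pi+\delta_n)^6\quad\text{if } n\ge 3 \text{ is odd},$$ where the $\delta_n$ ($n\ge 3$ odd) are nonzero real numbers satisfying $$\delta_n\sim 8\,(-1)^{\lfloor n/2\rfloor+1}e^{-(\pi\sqrt3/2)n}\quad (n\to\infty),$$ with $\lfloor n/2\rfloor$ the integer part of $n/2$ and $x_n\sim y_n$ meaning $x_n/y_n\to1$. In particular $\lambda_{n,3}^{1/6}=n\pi$ if and only if $n$ is even.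
   Context: The eigenvalues of this boundary value problem form a sequence of positive numbers tending to infinity. *)

theory Defs
  imports "HOL-Analysis.Analysis"
begin

text \<open>Classical eigenvalue of the sixth-order problem
  -u^(6) = lam u on [0,1], u(0)=u'(0)=u''(0)=0, u(1)=u'(1)=u''(1)=0.
  Du k is the k-th derivative of u (one-sided at the endpoints, i.e. taken
  within [0,1]); u must not vanish identically on [0,1].\<close>
definition sixth_order_eigenvalue :: "real \<Rightarrow> bool" where
  "sixth_order_eigenvalue lam \<longleftrightarrow>
     (\<exists>Du :: nat \<Rightarrow> real \<Rightarrow> real.
        (\<forall>k<6. \<forall>x\<in>{0..1}. (Du k has_real_derivative Du (Suc k) x) (at x within {0..1})) \<and>
        (\<forall>x\<in>{0..1}. - Du 6 x = lam * Du 0 x) \<and>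
        (\<forall>k<3. Du k 0 = 0 \<and> Du k 1 = 0) \<and>
        (\<exists>x\<in>{0..1}. Du 0 x \<noteq> 0))"

end

theory Submission
  imports Defs
begin

text \<open>
  Every solution of u^(6) = -k^6 u with u(0) = u'(0) = u''(0) = 0 is a combination of three
  fundamental solutions, since the initial value problem has unique solutions (energy estimate).
  Hence k^6 is an eigenvalue iff a 3x3 determinant vanishes at k; and eigenvalues are positive,
  because G = u u^(5) - u' u^(4) + u'' u''' vanishes at both ends while G' = u'''^2 - lambda u^2.
  The determinant factors as (2/9) sin(k/2) (cosh(sqrt 3 k/2) - cos(k/2)) D(k/2), where
  D(K) = char_fun K = 1 + sin^2 K - cos K cosh(sqrt 3 K). The zeros of sin(k/2) are k = n pi
  with n even. The equation D(K) = 0 reads cos K (cosh(sqrt 3 K) + cos K) = 2: it has no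
  solution with cos K <= 0 or 0 < K <= pi/2, and exactly one in each interval
  ((n-1) pi/2, (n+1) pi/2) with n >= 3 odd, by monotonicity of cos K - 2/(cosh(sqrt 3 K) + cos K)
  where cos K > 0. Writing this zero as n pi/2 + d gives sin d = +-2/(cosh(sqrt 3 K) + cos K),
  of order 4 exp(-sqrt 3 K); so delta_n = 2d ~ 8 (-1)^(floor(n/2)+1) exp(-pi sqrt 3 n/2).
\<close>

section \<open>Fundamental solutions of y^(6) = -y\<close>

text \<open>\<open>fund_sol j t\<close> is 1/6 times the sum of w^(-j) e^(w t) over the six roots w of w^6 = -1,
  namely \<plusminus>i and \<plusminus>sqrt 3/2 \<plusminus> i/2. Thus \<open>fund_sol 0\<close> solves y^(6) = -y with y(0) = 1 and
  y^(m)(0) = 0 for 0 < m < 6, and \<open>fund_sol j\<close> is its j-th antiderivative.\<close>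
definition fund_sol :: "real \<Rightarrow> real \<Rightarrow> real" where
  "fund_sol j t = (cos (t - j*pi/2) + exp (sqrt 3/2*t) * cos (t/2 - j*pi/6)
                   + exp (-(sqrt 3/2*t)) * cos (t/2 - 5*j*pi/6)) / 3"

lemma cos_sin_pi_sixths:
  "cos (pi/6) = sqrt 3/2" "sin (pi/6) = 1/2" "cos (pi/3) = 1/2" "sin (pi/3) = sqrt 3/2"
  "cos (pi*3/2) = 0" "sin (pi*3/2) = -1" "cos (pi*5/2) = 0" "sin (pi*5/2) = 1"
  "cos (pi*2/3) = -1/2" "sin (pi*2/3) = sqrt 3/2" "cos (pi*5/6) = - sqrt 3/2" "sin (pi*5/6) = 1/2"
  "cos (pi*5/3) = 1/2" "sin (pi*5/3) = - sqrt 3/2" "cos (pi*10/3) = -1/2" "sin (pi*10/3) = - sqrt 3/2"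
  "cos (pi*25/6) = sqrt 3/2" "sin (pi*25/6) = 1/2"
proof -
  have "pi*3/2 = pi/2 + pi" "pi*5/2 = pi/2 + pi + pi" "pi*2/3 = pi/2 + pi/6" "pi*5/6 = pi/2 + pi/3"
    "pi*5/3 = pi/6 + pi/2 + pi" "pi*10/3 = pi/3 + pi + pi + pi" "pi*25/6 = pi/6 + pi + pi + pi + pi"
    by simp_all
  then show
    "cos (pi/6) = sqrt 3/2" "sin (pi/6) = 1/2" "cos (pi/3) = 1/2" "sin (pi/3) = sqrt 3/2"
    "cos (pi*3/2) = 0" "sin (pi*3/2) = -1" "cos (pi*5/2) = 0" "sin (pi*5/2) = 1"
    "cos (pi*2/3) = -1/2" "sin (pi*2/3) = sqrt 3/2" "cos (pi*5/6) = - sqrt 3/2" "sin (pi*5/6) = 1/2"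
    "cos (pi*5/3) = 1/2" "sin (pi*5/3) = - sqrt 3/2" "cos (pi*10/3) = -1/2" "sin (pi*10/3) = - sqrt 3/2"
    "cos (pi*25/6) = sqrt 3/2" "sin (pi*25/6) = 1/2"
    by (simp_all only: cos_add sin_add) (simp_all add: cos_30 sin_30 cos_60 sin_60)
qed

lemma fund_sol_deriv: "(fund_sol j has_real_derivative fund_sol (j - 1) t) (at t)"
proof -
  have rot1: "cos (t - (j - 1)*pi/2) = - sin (t - j*pi/2)"
  proof -
    have "cos (t - (j - 1)*pi/2) = cos ((t - j*pi/2) + pi/2)"
      by (rule arg_cong[where f=cos]) (simp add: field_simps)
    then show ?thesis by (simp add: cos_add)
  qed
  have rot2: "cos (t/2 - (j - 1)*pi/6) = sqrt 3/2 * cos (t/2 - j*pi/6) - sin (t/2 - j*pi/6) / 2"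
  proof -
    have "cos (t/2 - (j - 1)*pi/6) = cos ((t/2 - j*pi/6) + pi/6)"
      by (rule arg_cong[where f=cos]) (simp add: field_simps)
    then show ?thesis by (simp add: cos_add cos_sin_pi_sixths)
  qed
  have rot3: "cos (t/2 - 5*(j - 1)*pi/6) = - sqrt 3/2 * cos (t/2 - 5*j*pi/6) - sin (t/2 - 5*j*pi/6) / 2"
  proof -
    have "cos (t/2 - 5*(j - 1)*pi/6) = cos ((t/2 - 5*j*pi/6) + pi*5/6)"
      by (rule arg_cong[where f=cos]) (simp add: field_simps)
    then show ?thesis by (simp add: cos_add cos_sin_pi_sixths)
  qed
  have D: "fund_sol (j - 1) t = (- sin (t - j*pi/2)
       + exp (sqrt 3/2*t) * (sqrt 3/2 * cos (t/2 - j*pi/6) - sin (t/2 - j*pi/6) / 2)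
       + exp (-(sqrt 3/2*t)) * (- sqrt 3/2 * cos (t/2 - 5*j*pi/6) - sin (t/2 - 5*j*pi/6) / 2)) / 3"
    (is "_ = ?D")
    unfolding fund_sol_def rot1 rot2 rot3 by (rule refl)
  have "(fund_sol j has_real_derivative ?D) (at t)"
    unfolding fund_sol_def by (auto intro!: derivative_eq_intros simp: field_simps)
  then show ?thesis
    unfolding D .
qed

lemma fund_sol_minus_6: "fund_sol (j - 6) t = - fund_sol j t"
proof -
  have "t - (j - 6)*pi/2 = (t - j*pi/2) + 3*pi"
    and "t/2 - (j - 6)*pi/6 = (t/2 - j*pi/6) + pi"
    and "t/2 - 5*(j - 6)*pi/6 = (t/2 - 5*j*pi/6) + 5*pi"
    by (simp_all add: field_simps)
  note shifts = this
  show ?thesis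
    unfolding fund_sol_def shifts cos_add by (simp add: field_simps)
qed

text \<open>The hypothesis \<open>j < 0\<close> only serves to make this a terminating rewrite rule.\<close>
lemma fund_sol_neg: "j < 0 \<Longrightarrow> fund_sol j t = - fund_sol (j + 6) t"
  using fund_sol_minus_6[of "j + 6" t] by simp

lemma fund_sol_1_to_5:
  "3 * fund_sol 1 t = sin t
    + exp (sqrt 3/2*t) * (sqrt 3/2 * cos (t/2) + sin (t/2)/2)
    + exp (-(sqrt 3/2*t)) * (sin (t/2)/2 - sqrt 3/2 * cos (t/2))"
  "3 * fund_sol 2 t = - cos t
    + exp (sqrt 3/2*t) * (cos (t/2)/2 + sqrt 3/2 * sin (t/2))
    + exp (-(sqrt 3/2*t)) * (cos (t/2)/2 - sqrt 3/2 * sin (t/2))"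
  "3 * fund_sol 3 t = - sin t
    + exp (sqrt 3/2*t) * sin (t/2) + exp (-(sqrt 3/2*t)) * sin (t/2)"
  "3 * fund_sol 4 t = cos t
    + exp (sqrt 3/2*t) * (sqrt 3/2 * sin (t/2) - cos (t/2)/2)
    - exp (-(sqrt 3/2*t)) * (cos (t/2)/2 + sqrt 3/2 * sin (t/2))"
  "3 * fund_sol 5 t = sin t
    + exp (sqrt 3/2*t) * (sin (t/2)/2 - sqrt 3/2 * cos (t/2))
    + exp (-(sqrt 3/2*t)) * (sqrt 3/2 * cos (t/2) + sin (t/2)/2)"
  unfolding fund_sol_def cos_diff by (simp_all add: cos_sin_pi_sixths field_simps)

lemma fund_sol_at_0:
  "fund_sol 0 0 = 1" "fund_sol 1 0 = 0" "fund_sol 2 0 = 0" "fund_sol 3 0 = 0" "fund_sol 4 0 = 0"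
  "fund_sol 5 0 = 0"
  using fund_sol_1_to_5[of 0] by (simp_all add: fund_sol_def)

lemma fund_sol_0_le_10: "0 \<le> t \<Longrightarrow> t \<le> pi \<Longrightarrow> fund_sol 0 t \<le> 10"
proof -
  assume t: "0 \<le> t" "t \<le> pi"
  have "sqrt 3 < sqrt ((7/4)^2)"
    by (rule real_sqrt_less_mono) (simp add: power2_eq_square)
  then have "sqrt 3/2*t \<le> 7/8 * pi" using t by (intro mult_mono) auto
  also have "\<dots> \<le> 3" using pi_approx by simp
  finally have "exp (sqrt 3/2*t) \<le> exp 3" by simp
  also have "exp (3::real) = exp 1 ^ 3" using exp_of_nat_mult[of 3 1] by simp
  also have "\<dots> \<le> 3 ^ 3" using exp_le by (intro power_mono) auto
  finally have "exp (sqrt 3/2*t) \<le> 27" by simp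
  moreover have "exp (-(sqrt 3/2*t)) \<le> 1" using t by simp
  moreover have "exp x * cos (t/2) \<le> exp x" for x
    using mult_left_le[of "cos (t/2)" "exp x"] by simp
  moreover have "3 * fund_sol 0 t = cos t + exp (sqrt 3/2*t) * cos (t/2) + exp (-(sqrt 3/2*t)) * cos (t/2)"
    by (simp add: fund_sol_def)
  ultimately show ?thesis
    using cos_le_one[of t] by (smt (verit))
qed

text \<open>Maclaurin's formula of order 12: the derivatives of \<open>fund_sol 0\<close> at 0 vanish except in
  orders 0 and 6, so \<open>fund_sol 0 t = 1 - t^6/720 + O(t^12)\<close>.\<close>
lemma fund_sol_0_lt_1:
  assumes t: "0 < t" "t \<le> pi"
  shows "fund_sol 0 t < 1"
proof -
  have shift: "- real m - 1 = - real (Suc m)" for m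
    by simp
  have "DERIV (fund_sol (- real m)) x :> fund_sol (- real (Suc m)) x" for m x
    using fund_sol_deriv[of "- real m" x, unfolded shift] .
  then have diff_Suc: "\<forall>m x. m < 12 \<and> 0 \<le> x \<and> x \<le> t \<longrightarrow>
      DERIV ((\<lambda>m. fund_sol (- real m)) m) x :> (\<lambda>m. fund_sol (- real m)) (Suc m) x"
    by simp
  have diff_0: "(\<lambda>m. fund_sol (- real m)) 0 = fund_sol 0"
    by simp
  obtain \<xi> where \<xi>: "0 < \<xi>" "\<xi> < t" and
    maclaurin: "fund_sol 0 t = (\<Sum>m<12. fund_sol (- real m) 0 / fact m * t ^ m)
                               + fund_sol (- 12) \<xi> / fact 12 * t ^ 12"
    using Maclaurin[OF t(1) _ diff_0 diff_Suc] by auto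
  have "(\<Sum>m<12. fund_sol (- real m) 0 / fact m * t ^ m) = 1 - t^6 / 720"
    by (simp add: lessThan_nat_numeral fact_numeral fund_sol_neg fund_sol_at_0)
  moreover have "fund_sol (- 12) \<xi> = fund_sol 0 \<xi>"
    by (simp add: fund_sol_neg)
  moreover have "fund_sol 0 \<xi> \<le> 10"
    using \<xi> t by (intro fund_sol_0_le_10) auto
  ultimately have "fund_sol 0 t \<le> 1 - t^6/720 + 10 / fact 12 * t^12"
    using maclaurin by (simp add: divide_right_mono mult_right_mono)
  also have "\<dots> = 1 - t^6 * (1/720 - 10 / fact 12 * t^6)"
    by (simp add: algebra_simps power_add[symmetric])
  also have "\<dots> < 1"
  proof -
    have "t^6 < 4^6"
      using t pi_less_4 by (intro power_strict_mono) auto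
    then have "10 / fact 12 * t^6 < 1/720"
      by (simp add: fact_numeral)
    then show ?thesis
      using t by simp
  qed
  finally show ?thesis .
qed

section \<open>Differential equations on the unit interval\<close>

definition derivative_chain :: "nat \<Rightarrow> (nat \<Rightarrow> real \<Rightarrow> real) \<Rightarrow> bool" where
  "derivative_chain n D \<longleftrightarrow>
     (\<forall>k<n. \<forall>x\<in>{0..1}. (D k has_real_derivative D (Suc k) x) (at x within {0..1}))"

lemma derivative_chainD:
  "derivative_chain n D \<Longrightarrow> k < n \<Longrightarrow> x \<in> {0..1} \<Longrightarrow>
    (D k has_real_derivative D (Suc k) x) (at x within {0..1})"
  unfolding derivative_chain_def by blast

lemma sixth_order_eigenvalue_iff_chain:
  "sixth_order_eigenvalue lam \<longleftrightarrow>
     (\<exists>D. derivative_chain 6 D \<and> (\<forall>x\<in>{0..1}. - D 6 x = lam * D 0 x) \<and>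
          (\<forall>k<3. D k 0 = 0 \<and> D k 1 = 0) \<and> (\<exists>x\<in>{0..1}. D 0 x \<noteq> 0))"
  unfolding sixth_order_eigenvalue_def derivative_chain_def ..

lemma deriv_zero_if_vanishing:
  assumes "\<forall>x\<in>{0..1}. f x = 0" and "(f has_real_derivative f') (at x within {0..1})"
    and x: "x \<in> {0..1}"
  shows "f' = 0"
proof -
  have "(f has_real_derivative 0) (at x within {0..1})"
    by (rule has_field_derivative_transform_within[of "\<lambda>_. 0" 0 x "{0..1}" 1])
       (use assms in auto)
  moreover have "at x within {0..1::real} \<noteq> bot"
    using x by (auto simp: trivial_limit_within islimpt_Icc)
  ultimately show ?thesis
    using vector_derivative_unique_within[of x "{0..1}" f f' 0] assms(2)
    by (simp add: has_real_derivative_iff_has_vector_derivative)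
qed

lemma vanishing_if_deriv_zero:
  assumes "\<forall>x\<in>{0..1}. (f has_real_derivative 0) (at x within {0..1})" and "f 0 = 0"
    and "x \<in> {0..1}"
  shows "f x = 0"
proof -
  obtain c where "\<forall>x\<in>{0..1}. f x = c"
    using has_field_derivative_zero_constant[of "{0..1::real}" f] assms(1) by auto
  then show ?thesis
    using assms(2,3) by force
qed

lemma decreasing_if_deriv_nonpos:
  assumes deriv: "\<forall>x\<in>{0..1}. (f has_real_derivative f' x) (at x within {0..1})"
    and nonpos: "\<forall>x\<in>{0..1}. f' x \<le> 0" and "0 \<le> a" "a \<le> b" "b \<le> 1"
  shows "f b \<le> f a"
proof (rule DERIV_nonpos_imp_decreasing_open[OF \<open>a \<le> b\<close>])
  fix x assume x: "a < x" "x < b"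
  then have x01: "x \<in> {0..1}"
    using \<open>0 \<le> a\<close> \<open>b \<le> 1\<close> by auto
  have "at x within {0..1} = at x"
    using x \<open>0 \<le> a\<close> \<open>b \<le> 1\<close> by (intro at_within_Icc_at) auto
  then have "(f has_real_derivative f' x) (at x)"
    using deriv x01 by metis
  then show "\<exists>y. (f has_real_derivative y) (at x) \<and> y \<le> 0"
    using nonpos x01 by blast
next
  have "continuous_on {0..1} f"
    using deriv by (meson DERIV_continuous continuous_on_eq_continuous_within)
  then show "continuous_on {a..b} f"
    by (rule continuous_on_subset) (use \<open>0 \<le> a\<close> \<open>b \<le> 1\<close> in auto)
qed

lemma adjacent_products_le_sum_squares:
  fixes w0 w1 w2 w3 w4 w5 c :: real
  shows "2 * (w0 * w1 + w1 * w2 + w2 * w3 + w3 * w4 + w4 * w5 + w5 * (c * w0))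
    \<le> (3 + c^2) * (w0 * w0 + w1 * w1 + w2 * w2 + w3 * w3 + w4 * w4 + w5 * w5)"
proof -
  have "(3 + c^2) * (w0 * w0 + w1 * w1 + w2 * w2 + w3 * w3 + w4 * w4 + w5 * w5)
      - 2 * (w0 * w1 + w1 * w2 + w2 * w3 + w3 * w4 + w4 * w5 + w5 * (c * w0))
      = (w0 - w1)^2 + (w1 - w2)^2 + (w2 - w3)^2 + (w3 - w4)^2 + (w4 - w5)^2 + (w5 - c * w0)^2
        + 2 * w0^2 + (1 + c^2) * (w1^2 + w2^2 + w3^2 + w4^2 + w5^2)"
    by (simp add: power2_eq_square algebra_simps)
  also have "\<dots> \<ge> 0"
    by (intro add_nonneg_nonneg mult_nonneg_nonneg) auto
  finally show ?thesis
    by simp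
qed

text \<open>Uniqueness for the initial value problem, by an energy estimate: E = W 0^2 + ... + W 5^2
  satisfies E' \<le> (3 + c^2) E, so exp (-(3 + c^2) x) E is nonincreasing and vanishes at 0.\<close>
lemma derivative_chain_6_eq_0:
  fixes W :: "nat \<Rightarrow> real \<Rightarrow> real"
  assumes chain: "derivative_chain 6 W" and ode: "\<forall>x\<in>{0..1}. W 6 x = c * W 0 x"
    and init: "\<forall>i<6. W i 0 = 0"
  shows "\<forall>i<6. \<forall>x\<in>{0..1}. W i x = 0"
proof -
  define C where "C = 3 + c^2"
  define E where "E x = W 0 x * W 0 x + W 1 x * W 1 x + W 2 x * W 2 x + W 3 x * W 3 x
      + W 4 x * W 4 x + W 5 x * W 5 x" for x
  define g where "g x = exp (-(C*x)) * E x" for x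
  define g' where "g' x = exp (-(C*x)) * (2*(W 0 x * W 1 x + W 1 x * W 2 x + W 2 x * W 3 x
      + W 3 x * W 4 x + W 4 x * W 5 x + W 5 x * W 6 x) - C * E x)" for x
  have "(g has_real_derivative g' x) (at x within {0..1})" if x: "x \<in> {0..1}" for x
  proof -
    have s: "Suc 0 = 1" "Suc 1 = 2" "Suc 2 = 3" "Suc 3 = 4" "Suc 4 = 5" "Suc 5 = 6"
      by simp_all
    note d = derivative_chainD[OF chain _ x]
    show ?thesis
      unfolding g_def E_def
      apply (rule derivative_eq_intros d[of 0, simplified, unfolded s] d[of 1, simplified, unfolded s]
                  d[of 2, simplified, unfolded s] d[of 3, simplified, unfolded s]
                  d[of 4, simplified, unfolded s] d[of 5, simplified, unfolded s] refl)+
      apply (simp add: g'_def E_def algebra_simps)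
      done
  qed
  moreover have "g' x \<le> 0" if x: "x \<in> {0..1}" for x
  proof -
    have "2*(W 0 x * W 1 x + W 1 x * W 2 x + W 2 x * W 3 x + W 3 x * W 4 x + W 4 x * W 5 x
        + W 5 x * W 6 x) \<le> C * E x"
      using adjacent_products_le_sum_squares[of "W 0 x" "W 1 x" "W 2 x" "W 3 x" "W 4 x" "W 5 x" c]
        ode x unfolding C_def E_def by simp
    then show ?thesis
      unfolding g'_def by (simp add: mult_nonneg_nonpos)
  qed
  ultimately have g_le: "g x \<le> g 0" if "x \<in> {0..1}" for x
    using decreasing_if_deriv_nonpos[of g g' 0 x] that by auto
  show ?thesis
  proof (intro allI impI ballI)
    fix i :: nat and x :: real assume i: "i < 6" and x: "x \<in> {0..1}"
    have "g 0 = 0"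
      using init unfolding g_def E_def by simp
    then have "E x \<le> 0"
      using g_le[OF x] unfolding g_def by (simp add: mult_le_0_iff)
    moreover have "0 \<le> W k x * W k x" for k
      by simp
    ultimately have "W 0 x * W 0 x = 0 \<and> W 1 x * W 1 x = 0 \<and> W 2 x * W 2 x = 0
        \<and> W 3 x * W 3 x = 0 \<and> W 4 x * W 4 x = 0 \<and> W 5 x * W 5 x = 0"
      unfolding E_def by (smt (verit))
    then have "W 0 x = 0 \<and> W 1 x = 0 \<and> W 2 x = 0 \<and> W 3 x = 0 \<and> W 4 x = 0 \<and> W 5 x = 0"
      by simp
    moreover have "i = 0 \<or> i = 1 \<or> i = 2 \<or> i = 3 \<or> i = 4 \<or> i = 5"
      using i by auto
    ultimately show "W i x = 0"
      by auto
  qed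
qed

lemma vanishing_if_deriv_nonneg:
  assumes "\<forall>x\<in>{0..1}. (f has_real_derivative f' x) (at x within {0..1})"
    and "\<forall>x\<in>{0..1}. 0 \<le> f' x" and "f 0 = 0" "f 1 = 0" and "x \<in> {0..1}"
  shows "f x = 0"
proof -
  have "\<forall>x\<in>{0..1}. ((\<lambda>y. - f y) has_real_derivative - f' x) (at x within {0..1})"
    using assms(1) by (auto intro: DERIV_minus)
  moreover have "\<forall>x\<in>{0..1}. - f' x \<le> 0"
    using assms(2) by simp
  ultimately have "- f x \<le> - f 0" "- f 1 \<le> - f x"
    using decreasing_if_deriv_nonpos[of "\<lambda>y. - f y" "\<lambda>x. - f' x"] assms(5) by auto
  with assms(3,4) show ?thesis
    by simp
qed

lemma derivative_chain_vanishing: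
  assumes chain: "derivative_chain n D" and top: "\<forall>x\<in>{0..1}. D n x = 0"
    and init: "\<forall>k<n. D k 0 = 0"
  shows "\<forall>x\<in>{0..1}. D 0 x = 0"
proof -
  have "\<forall>x\<in>{0..1}. D (n - m) x = 0" if "m \<le> n" for m
    using that
  proof (induction m)
    case 0
    then show ?case
      using top by simp
  next
    case (Suc m)
    then have "Suc (n - Suc m) = n - m" "n - Suc m < n"
      by auto
    then have "(D (n - Suc m) has_real_derivative 0) (at y within {0..1})" if "y \<in> {0..1}" for y
      using derivative_chainD[OF chain \<open>n - Suc m < n\<close> that] Suc that by auto
    moreover have "D (n - Suc m) 0 = 0"
      using init \<open>n - Suc m < n\<close> by blast
    ultimately show ?case
      using vanishing_if_deriv_zero[of "D (n - Suc m)"] by blast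
  qed
  from this[of n] show ?thesis
    by simp
qed

text \<open>If lam \<le> 0, then G = u u^(5) - u' u^(4) + u'' u''' vanishes at both ends and has
  G' = u'''^2 - lam u^2 \<ge> 0; so G' = 0, whence u''' = 0, and the conditions at 0 force u = 0.\<close>
lemma sixth_order_eigenvalue_pos:
  assumes "sixth_order_eigenvalue lam"
  shows "0 < lam"
proof (rule ccontr)
  assume "\<not> 0 < lam"
  then have lam: "lam \<le> 0" by simp
  obtain D where chain: "derivative_chain 6 D" and ode: "\<forall>x\<in>{0..1}. - D 6 x = lam * D 0 x"
    and bc: "\<forall>k<3. D k 0 = 0 \<and> D k 1 = 0" and nonzero: "\<exists>x\<in>{0..1}. D 0 x \<noteq> 0"
    using assms unfolding sixth_order_eigenvalue_iff_chain by blast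
  define G where "G x = D 5 x * D 0 x - D 4 x * D 1 x + D 3 x * D 2 x" for x
  define G' where "G' x = D 3 x * D 3 x - lam * (D 0 x * D 0 x)" for x
  have lam_sq: "lam * (D 0 x * D 0 x) \<le> 0" for x
    using lam by (simp add: mult_nonpos_nonneg)
  have G'_nonneg: "0 \<le> G' x" for x
    using lam_sq[of x] zero_le_square[of "D 3 x"] unfolding G'_def by linarith
  have deriv_G: "\<forall>x\<in>{0..1}. (G has_real_derivative G' x) (at x within {0..1})"
  proof
    fix x :: real assume x: "x \<in> {0..1}"
    have s: "Suc 0 = 1" "Suc 1 = 2" "Suc 2 = 3" "Suc 3 = 4" "Suc 4 = 5" "Suc 5 = 6"
      by simp_all
    note d = derivative_chainD[OF chain _ x]
    have "- D 6 x = lam * D 0 x"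
      using ode x by blast
    then have D6: "D 6 x = - lam * D 0 x"
      by simp
    show "(G has_real_derivative G' x) (at x within {0..1})"
      unfolding G_def
      apply (rule derivative_eq_intros d[of 0, simplified, unfolded s] d[of 1, simplified, unfolded s]
                  d[of 2, simplified, unfolded s] d[of 3, simplified, unfolded s]
                  d[of 4, simplified, unfolded s] d[of 5, simplified, unfolded s] refl)+
      apply (simp add: G'_def D6 algebra_simps)
      done
  qed
  have "G 0 = 0" "G 1 = 0"
    using bc unfolding G_def by auto
  then have "G x = 0" if "x \<in> {0..1}" for x
    using vanishing_if_deriv_nonneg[OF deriv_G] G'_nonneg that by blast
  then have "G' x = 0" if "x \<in> {0..1}" for x
    using deriv_zero_if_vanishing deriv_G that by blast
  then have "D 3 x * D 3 x = lam * (D 0 x * D 0 x)" if "x \<in> {0..1}" for x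
    using that unfolding G'_def by simp
  with lam_sq have D3: "\<forall>x\<in>{0..1}. D 3 x = 0"
    by (metis mult_eq_0_iff not_square_less_zero order_le_less)
  have "derivative_chain 3 D"
    using chain unfolding derivative_chain_def by auto
  then have "\<forall>x\<in>{0..1}. D 0 x = 0"
    using derivative_chain_vanishing D3 bc by blast
  then show False
    using nonzero by auto
qed

section \<open>The characteristic determinant\<close>

lemma det3_eq_0_iff_kernel:
  fixes a11 a12 a13 a21 a22 a23 a31 a32 a33 :: real
  shows "a11*(a22*a33 - a23*a32) - a12*(a21*a33 - a23*a31) + a13*(a21*a32 - a22*a31) = 0 \<longleftrightarrow>
    (\<exists>x y z. (x \<noteq> 0 \<or> y \<noteq> 0 \<or> z \<noteq> 0) \<and> a11*x + a12*y + a13*z = 0 \<and>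
       a21*x + a22*y + a23*z = 0 \<and> a31*x + a32*y + a33*z = 0)"
  (is "?d = 0 \<longleftrightarrow> _")
proof
  assume "?d = 0"
  define A :: "real^3^3"
    where "A = vector [vector [a11,a12,a13], vector [a21,a22,a23], vector [a31,a32,a33]]"
  have "det A = 0"
    using \<open>?d = 0\<close> unfolding A_def det_3 by (simp add: algebra_simps)
  then have "rank A \<noteq> CARD(3)"
    by (simp add: det_eq_0_rank)
  then obtain v where "v \<noteq> 0" "A *v v = 0"
    using matrix_nonfull_linear_equations_eq by blast
  then have "(A *v v) $ 1 = 0" "(A *v v) $ 2 = 0" "(A *v v) $ 3 = 0"
    by simp_all
  then have "a11 * v$1 + a12 * v$2 + a13 * v$3 = 0" "a21 * v$1 + a22 * v$2 + a23 * v$3 = 0"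
    "a31 * v$1 + a32 * v$2 + a33 * v$3 = 0"
    unfolding A_def by (simp_all add: matrix_vector_mult_def sum_3)
  moreover have "v$1 \<noteq> 0 \<or> v$2 \<noteq> 0 \<or> v$3 \<noteq> 0"
    using \<open>v \<noteq> 0\<close> by (auto simp: vec_eq_iff forall_3)
  ultimately show "\<exists>x y z. (x \<noteq> 0 \<or> y \<noteq> 0 \<or> z \<noteq> 0) \<and> a11*x + a12*y + a13*z = 0 \<and>
       a21*x + a22*y + a23*z = 0 \<and> a31*x + a32*y + a33*z = 0"
    by blast
next
  assume "\<exists>x y z. (x \<noteq> 0 \<or> y \<noteq> 0 \<or> z \<noteq> 0) \<and> a11*x + a12*y + a13*z = 0 \<and>
       a21*x + a22*y + a23*z = 0 \<and> a31*x + a32*y + a33*z = 0"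
  then obtain x y z where "x \<noteq> 0 \<or> y \<noteq> 0 \<or> z \<noteq> 0"
    and "a11*x + a12*y + a13*z = 0" "a21*x + a22*y + a23*z = 0" "a31*x + a32*y + a33*z = 0"
    by blast
  moreover from this(2-4) have "?d * x = 0" "?d * y = 0" "?d * z = 0"
    by algebra+
  ultimately show "?d = 0"
    by auto
qed

text \<open>The i-th derivative of the solution of u^(6) = -k^6 u with u(0) = u'(0) = u''(0) = 0 and
  (u''', u^(4), u^(5))(0) = (k^3 c3, k^4 c4, k^5 c5).\<close>
definition clamped_sol :: "real \<Rightarrow> real \<Rightarrow> real \<Rightarrow> real \<Rightarrow> nat \<Rightarrow> real \<Rightarrow> real" where
  "clamped_sol c3 c4 c5 k i x = k^i * (c3 * fund_sol (3 - real i) (k*x)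
     + c4 * fund_sol (4 - real i) (k*x) + c5 * fund_sol (5 - real i) (k*x))"

lemma clamped_sol_deriv:
  "(clamped_sol c3 c4 c5 k i has_real_derivative clamped_sol c3 c4 c5 k (Suc i) x) (at x within S)"
proof -
  have scaled: "((\<lambda>x. fund_sol j (k*x)) has_real_derivative fund_sol (j - 1) (k*x) * k) (at x within S)"
    for j
    by (rule DERIV_chain2[OF fund_sol_deriv]) (auto intro!: derivative_eq_intros)
  have shift: "a - real i - 1 = a - real (Suc i)" for a
    by simp
  show ?thesis
    unfolding clamped_sol_def
    apply (rule derivative_eq_intros scaled refl)+
    apply (simp add: shift algebra_simps)
    done
qed

lemma derivative_chain_clamped_sol: "derivative_chain n (clamped_sol c3 c4 c5 k)"
  unfolding derivative_chain_def using clamped_sol_deriv by blast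

lemma clamped_sol_6: "clamped_sol c3 c4 c5 k 6 x = - (k^6) * clamped_sol c3 c4 c5 k 0 x"
  using fund_sol_minus_6[of 3 "k*x"] fund_sol_minus_6[of 4 "k*x"] fund_sol_minus_6[of 5 "k*x"]
  unfolding clamped_sol_def by (simp add: algebra_simps)

lemma clamped_sol_at_0:
  "clamped_sol c3 c4 c5 k 0 0 = 0" "clamped_sol c3 c4 c5 k 1 0 = 0" "clamped_sol c3 c4 c5 k 2 0 = 0"
  "clamped_sol c3 c4 c5 k 3 0 = k^3 * c3" "clamped_sol c3 c4 c5 k 4 0 = k^4 * c4"
  "clamped_sol c3 c4 c5 k 5 0 = k^5 * c5"
  unfolding clamped_sol_def by (simp_all add: fund_sol_neg fund_sol_at_0)

lemma clamped_sol_at_1: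
  "clamped_sol c3 c4 c5 k 0 1 = c3 * fund_sol 3 k + c4 * fund_sol 4 k + c5 * fund_sol 5 k"
  "clamped_sol c3 c4 c5 k 1 1 = k * (c3 * fund_sol 2 k + c4 * fund_sol 3 k + c5 * fund_sol 4 k)"
  "clamped_sol c3 c4 c5 k 2 1 = k^2 * (c3 * fund_sol 1 k + c4 * fund_sol 2 k + c5 * fund_sol 3 k)"
  unfolding clamped_sol_def by simp_all

definition char_det :: "real \<Rightarrow> real" where
  "char_det k = fund_sol 3 k * (fund_sol 3 k * fund_sol 3 k - fund_sol 4 k * fund_sol 2 k)
     - fund_sol 4 k * (fund_sol 2 k * fund_sol 3 k - fund_sol 4 k * fund_sol 1 k)
     + fund_sol 5 k * (fund_sol 2 k * fund_sol 2 k - fund_sol 3 k * fund_sol 1 k)"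

lemma sixth_order_eigenvalue_if_char_det:
  assumes k: "0 < k" and det: "char_det k = 0"
  shows "sixth_order_eigenvalue (k^6)"
proof -
  obtain c3 c4 c5 where c: "c3 \<noteq> 0 \<or> c4 \<noteq> 0 \<or> c5 \<noteq> 0"
    and "fund_sol 3 k * c3 + fund_sol 4 k * c4 + fund_sol 5 k * c5 = 0"
      "fund_sol 2 k * c3 + fund_sol 3 k * c4 + fund_sol 4 k * c5 = 0"
      "fund_sol 1 k * c3 + fund_sol 2 k * c4 + fund_sol 3 k * c5 = 0"
    using det unfolding char_det_def det3_eq_0_iff_kernel by blast
  then have at_1: "c3 * fund_sol 3 k + c4 * fund_sol 4 k + c5 * fund_sol 5 k = 0"
      "c3 * fund_sol 2 k + c4 * fund_sol 3 k + c5 * fund_sol 4 k = 0"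
      "c3 * fund_sol 1 k + c4 * fund_sol 2 k + c5 * fund_sol 3 k = 0"
    by (simp_all only: mult.commute)
  let ?D = "clamped_sol c3 c4 c5 k"
  have "\<forall>x\<in>{0..1}. - ?D 6 x = k^6 * ?D 0 x"
    using clamped_sol_6 by simp
  moreover have "\<forall>i<3. ?D i 0 = 0 \<and> ?D i 1 = 0"
  proof (intro allI impI)
    fix i :: nat assume "i < 3"
    then have "i = 0 \<or> i = 1 \<or> i = 2"
      by auto
    then show "?D i 0 = 0 \<and> ?D i 1 = 0"
      using clamped_sol_at_0 clamped_sol_at_1 at_1 by auto
  qed
  moreover have "\<exists>x\<in>{0..1}. ?D 0 x \<noteq> 0"
  proof (rule ccontr)
    assume "\<not> ?thesis"
    then have "\<forall>x\<in>{0..1}. ?D 0 x = 0"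
      by auto
    moreover have "\<forall>x\<in>{0..1}. ?D (Suc i) x = 0" if "\<forall>x\<in>{0..1}. ?D i x = 0" for i
      using deriv_zero_if_vanishing[OF that clamped_sol_deriv] by blast
    ultimately have "\<forall>x\<in>{0..1}. ?D i x = 0" for i
      by (induction i) auto
    then have "?D 3 0 = 0" "?D 4 0 = 0" "?D 5 0 = 0"
      by auto
    then show False
      using clamped_sol_at_0 k c by simp
  qed
  ultimately show ?thesis
    unfolding sixth_order_eigenvalue_iff_chain
    using derivative_chain_clamped_sol[of 6 c3 c4 c5 k] by blast
qed

lemma clamped_sol_unique:
  assumes k: "0 < k" and chain: "derivative_chain 6 D"
    and ode: "\<forall>x\<in>{0..1}. D 6 x = - (k^6) * D 0 x" and init: "\<forall>i<3. D i 0 = 0"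
  shows "\<forall>i<6. \<forall>x\<in>{0..1}. D i x = clamped_sol (D 3 0 / k^3) (D 4 0 / k^4) (D 5 0 / k^5) k i x"
proof -
  define c3 c4 c5 where "c3 = D 3 0 / k^3" and "c4 = D 4 0 / k^4" and "c5 = D 5 0 / k^5"
  define W where "W i x = D i x - clamped_sol c3 c4 c5 k i x" for i x
  have chain_W: "derivative_chain 6 W"
    unfolding derivative_chain_def
  proof (intro allI impI ballI)
    fix i :: nat and x :: real assume "i < 6" "x \<in> {0..1}"
    with chain have "(D i has_real_derivative D (Suc i) x) (at x within {0..1})"
      by (rule derivative_chainD)
    then show "(W i has_real_derivative W (Suc i) x) (at x within {0..1})"
      unfolding W_def by (intro DERIV_diff clamped_sol_deriv)
  qed
  have ode_W: "\<forall>x\<in>{0..1}. W 6 x = - (k^6) * W 0 x"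
  proof
    fix x :: real assume "x \<in> {0..1}"
    then have "D 6 x = - (k^6) * D 0 x"
      using ode by blast
    then show "W 6 x = - (k^6) * W 0 x"
      unfolding W_def clamped_sol_6 by (simp add: algebra_simps)
  qed
  have init_W: "\<forall>i<6. W i 0 = 0"
  proof (intro allI impI)
    fix i :: nat assume "i < 6"
    then have "i = 0 \<or> i = 1 \<or> i = 2 \<or> i = 3 \<or> i = 4 \<or> i = 5"
      by auto
    then show "W i 0 = 0"
      unfolding W_def using init k clamped_sol_at_0 by (auto simp: c3_def c4_def c5_def)
  qed
  have "\<forall>i<6. \<forall>x\<in>{0..1}. D i x = clamped_sol c3 c4 c5 k i x"
    using derivative_chain_6_eq_0[OF chain_W ode_W init_W] unfolding W_def by auto
  then show ?thesis
    unfolding c3_def c4_def c5_def .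
qed

text \<open>Conversely, an eigenfunction is a clamped solution, and its boundary values at 1 yield a
  nonzero vector in the kernel of the characteristic matrix.\<close>
lemma char_det_root_eq_0:
  assumes eigen: "sixth_order_eigenvalue lam"
  shows "char_det (root 6 lam) = 0"
proof -
  define k where "k = root 6 lam"
  have k: "0 < k" "k^6 = lam"
    using sixth_order_eigenvalue_pos[OF eigen] unfolding k_def by simp_all
  obtain D where chain: "derivative_chain 6 D" and ode: "\<forall>x\<in>{0..1}. - D 6 x = lam * D 0 x"
    and bc: "\<forall>i<3. D i 0 = 0 \<and> D i 1 = 0" and nonzero: "\<exists>x\<in>{0..1}. D 0 x \<noteq> 0"
    using eigen unfolding sixth_order_eigenvalue_iff_chain by blast
  define c3 c4 c5 where "c3 = D 3 0 / k^3" and "c4 = D 4 0 / k^4" and "c5 = D 5 0 / k^5"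
  have "\<forall>x\<in>{0..1}. D 6 x = - (k^6) * D 0 x"
  proof
    fix x :: real assume "x \<in> {0..1}"
    then have "- D 6 x = lam * D 0 x"
      using ode by blast
    then show "D 6 x = - (k^6) * D 0 x"
      unfolding k(2) by simp
  qed
  moreover have "\<forall>i<3. D i 0 = 0"
    using bc by blast
  ultimately have D_eq: "\<forall>i<6. \<forall>x\<in>{0..1}. D i x = clamped_sol c3 c4 c5 k i x"
    unfolding c3_def c4_def c5_def by (rule clamped_sol_unique[OF k(1) chain])
  have "c3 \<noteq> 0 \<or> c4 \<noteq> 0 \<or> c5 \<noteq> 0"
  proof (rule ccontr)
    assume "\<not> ?thesis"
    then have "\<forall>x\<in>{0..1}. D 0 x = 0"
      using D_eq unfolding clamped_sol_def by auto
    then show False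
      using nonzero by auto
  qed
  moreover have "c3 * fund_sol 3 k + c4 * fund_sol 4 k + c5 * fund_sol 5 k = 0"
    using D_eq bc clamped_sol_at_1(1)[of c3 c4 c5 k] by auto
  then have "fund_sol 3 k * c3 + fund_sol 4 k * c4 + fund_sol 5 k * c5 = 0"
    by (simp only: mult.commute)
  moreover have "k * (c3 * fund_sol 2 k + c4 * fund_sol 3 k + c5 * fund_sol 4 k) = 0"
    using D_eq bc clamped_sol_at_1(2)[of c3 c4 c5 k] by auto
  then have "fund_sol 2 k * c3 + fund_sol 3 k * c4 + fund_sol 4 k * c5 = 0"
    using k(1) by (simp add: mult.commute)
  moreover have "k^2 * (c3 * fund_sol 1 k + c4 * fund_sol 2 k + c5 * fund_sol 3 k) = 0"
    using D_eq bc clamped_sol_at_1(3)[of c3 c4 c5 k] by auto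
  then have "fund_sol 1 k * c3 + fund_sol 2 k * c4 + fund_sol 3 k * c5 = 0"
    using k(1) by (simp add: mult.commute)
  ultimately show ?thesis
    unfolding k_def[symmetric] char_det_def det3_eq_0_iff_kernel by blast
qed

definition char_fun :: "real \<Rightarrow> real" where
  "char_fun K = 1 + sin K ^ 2 - cos K * cosh (sqrt 3 * K)"

lemma char_det_polynomial:
  fixes cc ss pp uu :: real
  assumes "cc^2 + ss^2 = 1" and "uu^2 = 3 * (pp^2 - 1)"
  shows "(2 * ss * (pp - cc)) * ((2 * ss * (pp - cc)) * (2 * ss * (pp - cc))
        - ((cc^2 - ss^2) - pp * cc + ss * uu) * (-(cc^2 - ss^2) + pp * cc + ss * uu))
     - ((cc^2 - ss^2) - pp * cc + ss * uu) * ((-(cc^2 - ss^2) + pp * cc + ss * uu) * (2 * ss * (pp - cc))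
        - ((cc^2 - ss^2) - pp * cc + ss * uu) * (2 * ss * cc + pp * ss + cc * uu))
     + (2 * ss * cc + pp * ss - cc * uu) * ((-(cc^2 - ss^2) + pp * cc + ss * uu) * (-(cc^2 - ss^2) + pp * cc + ss * uu)
        - (2 * ss * (pp - cc)) * (2 * ss * cc + pp * ss + cc * uu))
     = 6 * ss * (pp - cc) * (1 + ss^2 - cc * pp)"
proof -
  have "(2 * ss * (pp - cc)) * ((2 * ss * (pp - cc)) * (2 * ss * (pp - cc))
        - ((cc^2 - ss^2) - pp * cc + ss * uu) * (-(cc^2 - ss^2) + pp * cc + ss * uu))
     - ((cc^2 - ss^2) - pp * cc + ss * uu) * ((-(cc^2 - ss^2) + pp * cc + ss * uu) * (2 * ss * (pp - cc))
        - ((cc^2 - ss^2) - pp * cc + ss * uu) * (2 * ss * cc + pp * ss + cc * uu))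
     + (2 * ss * cc + pp * ss - cc * uu) * ((-(cc^2 - ss^2) + pp * cc + ss * uu) * (-(cc^2 - ss^2) + pp * cc + ss * uu)
        - (2 * ss * (pp - cc)) * (2 * ss * cc + pp * ss + cc * uu))
     - 6 * ss * (pp - cc) * (1 + ss^2 - cc * pp)
     = (cc^2 + ss^2 - 1) * (- 6 * cc * ss * pp^2 + 6 * cc^2 * ss * pp + 6 * ss^3 * pp - 6 * cc * ss + 6 * ss * pp)
       + (uu^2 - 3 * (pp^2 - 1)) * (- 2 * ss^3 * pp + 4 * cc * ss^3 + 2 * cc^3 * ss - 2 * cc^2 * ss * pp)"
    by algebra
  then show ?thesis
    using assms by simp
qed

text \<open>The factor sin(k/2) accounts for the eigenvalues (n pi)^6 with n even, the factor
  char_fun(k/2) for those with n odd.\<close>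
lemma char_det_eq:
  "char_det k = 2/9 * sin (k/2) * (cosh (sqrt 3 * (k/2)) - cos (k/2)) * char_fun (k/2)"
proof -
  define cc ss pp uu where "cc = cos (k/2)" and "ss = sin (k/2)"
    and "pp = cosh (sqrt 3 * (k/2))" and "uu = sqrt 3 * sinh (sqrt 3 * (k/2))"
  have sq: "cc^2 + ss^2 = 1" "uu^2 = 3 * (pp^2 - 1)"
    unfolding cc_def ss_def uu_def pp_def by (simp_all add: power_mult_distrib cosh_square_eq)
  have half: "sin k = 2 * sin (k/2) * cos (k/2)" "cos k = cos (k/2)^2 - sin (k/2)^2"
    using sin_double[of "k/2"] cos_double[of "k/2"] by simp_all
  have sol: "3 * fund_sol 1 k = 2 * ss * cc + pp * ss + cc * uu"
    "3 * fund_sol 2 k = -(cc^2 - ss^2) + pp * cc + ss * uu"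
    "3 * fund_sol 3 k = 2 * ss * (pp - cc)"
    "3 * fund_sol 4 k = (cc^2 - ss^2) - pp * cc + ss * uu"
    "3 * fund_sol 5 k = 2 * ss * cc + pp * ss - cc * uu"
    unfolding fund_sol_1_to_5 half
      cc_def ss_def pp_def uu_def cosh_field_def sinh_field_def
    by (simp_all add: field_simps)
  have "27 * char_det k
      = (3 * fund_sol 3 k) * ((3 * fund_sol 3 k) * (3 * fund_sol 3 k) - (3 * fund_sol 4 k) * (3 * fund_sol 2 k))
      - (3 * fund_sol 4 k) * ((3 * fund_sol 2 k) * (3 * fund_sol 3 k) - (3 * fund_sol 4 k) * (3 * fund_sol 1 k))
      + (3 * fund_sol 5 k) * ((3 * fund_sol 2 k) * (3 * fund_sol 2 k) - (3 * fund_sol 3 k) * (3 * fund_sol 1 k))"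
    unfolding char_det_def by (simp add: algebra_simps)
  also have "\<dots> = 6 * ss * (pp - cc) * (1 + ss^2 - cc * pp)"
    unfolding sol using char_det_polynomial[OF sq] .
  finally have "27 * char_det k = 6 * ss * (pp - cc) * (1 + ss^2 - cc * pp)" .
  then show ?thesis
    unfolding char_fun_def cc_def ss_def pp_def by (simp add: field_simps)
qed

lemma cosh_sqrt3_gt_1:
  assumes "K \<noteq> 0"
  shows "1 < cosh (sqrt 3 * K)"
proof -
  have "cosh (sqrt 3 * K) \<noteq> 1"
    using assms cosh_real_one_iff by simp
  then show ?thesis
    using cosh_real_ge_1[of "sqrt 3 * K"] by (metis order_less_le)
qed

lemma sixth_order_eigenvalue_iff:
  "sixth_order_eigenvalue lam \<longleftrightarrow> (\<exists>k>0. lam = k^6 \<and> (sin (k/2) = 0 \<or> char_fun (k/2) = 0))"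
proof
  assume eigen: "sixth_order_eigenvalue lam"
  define k where "k = root 6 lam"
  have k: "0 < k" "lam = k^6"
    using sixth_order_eigenvalue_pos[OF eigen] unfolding k_def by simp_all
  have "1 < cosh (sqrt 3 * (k/2))"
    using k(1) by (intro cosh_sqrt3_gt_1) simp
  then have "0 < cosh (sqrt 3 * (k/2)) - cos (k/2)"
    using cos_le_one[of "k/2"] by linarith
  then have "sin (k/2) = 0 \<or> char_fun (k/2) = 0"
    using char_det_root_eq_0[OF eigen] unfolding k_def[symmetric] char_det_eq by simp
  then show "\<exists>k>0. lam = k^6 \<and> (sin (k/2) = 0 \<or> char_fun (k/2) = 0)"
    using k by blast
next
  assume "\<exists>k>0. lam = k^6 \<and> (sin (k/2) = 0 \<or> char_fun (k/2) = 0)"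
  then obtain k where "0 < k" "lam = k^6" "sin (k/2) = 0 \<or> char_fun (k/2) = 0"
    by blast
  then show "sixth_order_eigenvalue lam"
    using sixth_order_eigenvalue_if_char_det[of k] unfolding char_det_eq by auto
qed

section \<open>Zeros of the characteristic function\<close>

lemma char_fun_eq: "char_fun K = 2 - cos K * (cosh (sqrt 3 * K) + cos K)"
  unfolding char_fun_def using sin_squared_eq[of K] by (simp add: power2_eq_square algebra_simps)

lemma cosh_plus_cos_pos: "K \<noteq> 0 \<Longrightarrow> 0 < cosh (sqrt 3 * K) + cos K"
  using cosh_sqrt3_gt_1[of K] cos_ge_minus_one[of K] by linarith

lemma char_fun_pos_if_cos_nonpos:
  assumes "cos K \<le> 0"
  shows "0 < char_fun K"
proof -
  have "cos K * cosh (sqrt 3 * K) \<le> 0"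
    using assms cosh_real_ge_1[of "sqrt 3 * K"] by (simp add: mult_nonpos_nonneg)
  then show ?thesis
    unfolding char_fun_def by (smt (verit) zero_le_power2)
qed

lemma char_fun_pos_near_0:
  assumes "0 < K" "K \<le> pi/2"
  shows "0 < char_fun K"
proof -
  have "3 * fund_sol 0 (2*K) = cos (2*K) + (exp (sqrt 3 * K) + exp (-(sqrt 3 * K))) * cos K"
    unfolding fund_sol_def by (simp add: algebra_simps)
  also have "\<dots> = 3 - 2 * char_fun K"
    unfolding char_fun_def cos_double_sin cosh_field_def by (simp add: field_simps)
  finally have "3 * fund_sol 0 (2*K) = 3 - 2 * char_fun K" .
  moreover have "fund_sol 0 (2*K) < 1"
    using assms by (intro fund_sol_0_lt_1) auto
  ultimately show ?thesis
    by linarith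
qed

lemma cos_add_2npi: "cos (y + 2 * real j * pi) = cos y"
  and sin_add_2npi: "sin (y + 2 * real j * pi) = sin y"
proof -
  have npi: "2 * real j * pi = real (2*j) * pi"
    by simp
  show "cos (y + 2 * real j * pi) = cos y"
    unfolding npi cos_add by simp
  show "sin (y + 2 * real j * pi) = sin y"
    unfolding npi sin_add by simp
qed

lemma cos_2npi:
  "cos (2 * real j * pi) = 1" "cos (2 * real j * pi - pi/2) = 0" "cos (2 * real j * pi + pi/2) = 0"
proof -
  have shifts: "2 * real j * pi = 0 + 2 * real j * pi"
    "2 * real j * pi - pi/2 = -(pi/2) + 2 * real j * pi"
    "2 * real j * pi + pi/2 = pi/2 + 2 * real j * pi"
    by simp_all
  show "cos (2 * real j * pi) = 1"
    by (subst shifts(1), simp only: cos_add_2npi cos_zero)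
  show "cos (2 * real j * pi - pi/2) = 0" "cos (2 * real j * pi + pi/2) = 0"
    unfolding shifts(2,3) cos_add_2npi by simp_all
qed

lemma cos_nonpos_2npi:
  assumes "2 * real j * pi + pi/2 \<le> K" "K \<le> 2 * real j * pi + 3*pi/2"
  shows "cos K \<le> 0"
proof -
  define y where "y = K - 2 * real j * pi"
  have "cos (y - pi) \<ge> 0"
    using assms unfolding y_def by (intro cos_ge_zero) auto
  moreover have "cos K = cos y"
    using cos_add_2npi[of y j] y_def by simp
  ultimately show ?thesis
    by (simp add: cos_diff)
qed

lemma sin_nonpos_2npi:
  assumes "2 * real j * pi - pi/2 \<le> K" "K \<le> 2 * real j * pi"
  shows "sin K \<le> 0"
proof -
  define y where "y = K - 2 * real j * pi"
  have "0 \<le> sin (- y)"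
    using assms unfolding y_def by (intro sin_ge_zero) auto
  moreover have "sin K = sin y"
    using sin_add_2npi[of y j] y_def by simp
  ultimately show ?thesis
    by simp
qed

lemma cosh_sqrt3_gt_4:
  assumes "3/2*pi \<le> K"
  shows "4 < cosh (sqrt 3 * K)"
proof -
  have "sqrt ((17/10)^2) < sqrt (3::real)"
    by (rule real_sqrt_less_mono) (simp add: power2_eq_square)
  then have "17/10 * (3/2*pi) \<le> sqrt 3 * K"
    using assms by (intro mult_mono) auto
  moreover have "7 < 17/10 * (3/2*pi)"
    using pi_gt3 by simp
  moreover have "1 + sqrt 3 * K \<le> exp (sqrt 3 * K)"
    by (rule exp_ge_add_one_self)
  moreover have "exp (sqrt 3 * K) / 2 \<le> cosh (sqrt 3 * K)"
    unfolding cosh_field_def by (simp add: divide_right_mono)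
  ultimately show ?thesis
    by linarith
qed

text \<open>char_fun K = - (cosh (sqrt 3 * K) + cos K) * reduced_char_fun K with a positive first factor
  for K \<noteq> 0; unlike char_fun, reduced_char_fun is monotone where its zeros lie.\<close>
definition reduced_char_fun :: "real \<Rightarrow> real" where
  "reduced_char_fun K = cos K - 2 / (cosh (sqrt 3 * K) + cos K)"

lemma char_fun_eq_0_iff:
  assumes "K \<noteq> 0"
  shows "char_fun K = 0 \<longleftrightarrow> reduced_char_fun K = 0"
proof -
  have nz: "cosh (sqrt 3 * K) + cos K \<noteq> 0"
    using cosh_plus_cos_pos[OF assms] by simp
  then have "char_fun K = - (cosh (sqrt 3 * K) + cos K) * reduced_char_fun K"
    unfolding char_fun_eq reduced_char_fun_def by (simp add: field_simps)
  with nz show ?thesis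
    by simp
qed

lemma reduced_char_fun_deriv:
  assumes "K \<noteq> 0"
  shows "(reduced_char_fun has_real_derivative
      - sin K + 2 * (sqrt 3 * sinh (sqrt 3 * K) - sin K) / (cosh (sqrt 3 * K) + cos K)^2) (at K)"
proof -
  have nz: "cosh (sqrt 3 * K) + cos K \<noteq> 0"
    using cosh_plus_cos_pos[OF assms] by simp
  show ?thesis
    unfolding reduced_char_fun_def
    apply (rule derivative_eq_intros refl | simp add: nz)+
    using nz by (simp add: minus_divide_left algebra_simps power2_eq_square)
qed

lemma reduced_char_fun_neg_if_cos_0:
  assumes "K \<noteq> 0" and "cos K = 0"
  shows "reduced_char_fun K < 0"
proof -
  have "0 < cosh (sqrt 3 * K)"
    using cosh_sqrt3_gt_1[OF assms(1)] by simp
  then show ?thesis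
    unfolding reduced_char_fun_def assms(2) by simp
qed

lemma reduced_char_fun_increasing:
  assumes "1 \<le> j" and "2 * real j * pi - pi/2 \<le> K1" and "K1 < K2" and "K2 \<le> 2 * real j * pi"
  shows "reduced_char_fun K1 < reduced_char_fun K2"
proof (rule DERIV_pos_imp_increasing[OF \<open>K1 < K2\<close>])
  fix x assume x: "K1 \<le> x" "x \<le> K2"
  have "2 * pi \<le> 2 * real j * pi"
    using assms(1) by simp
  then have "0 < x"
    using x assms(2) pi_gt_zero by linarith
  moreover have "sin x \<le> 0"
    using sin_nonpos_2npi[of j x] x assms(2,4) by linarith
  moreover have "0 < sqrt 3 * sinh (sqrt 3 * x)"
    using \<open>0 < x\<close> by simp
  ultimately have "0 < 2 * (sqrt 3 * sinh (sqrt 3 * x) - sin x)"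
    using add_pos_nonneg[of "sqrt 3 * sinh (sqrt 3 * x)" "- sin x"] by simp
  moreover have "0 < (cosh (sqrt 3 * x) + cos x)^2"
    using cosh_plus_cos_pos[of x] \<open>0 < x\<close> by simp
  ultimately have "0 < 2 * (sqrt 3 * sinh (sqrt 3 * x) - sin x) / (cosh (sqrt 3 * x) + cos x)^2"
    by (rule divide_pos_pos)
  then have "0 < - sin x + 2 * (sqrt 3 * sinh (sqrt 3 * x) - sin x) / (cosh (sqrt 3 * x) + cos x)^2"
    using \<open>sin x \<le> 0\<close> by linarith
  moreover have "x \<noteq> 0"
    using \<open>0 < x\<close> by simp
  ultimately show "\<exists>y. (reduced_char_fun has_real_derivative y) (at x) \<and> 0 < y"
    using reduced_char_fun_deriv by blast
qed

lemma reduced_char_fun_pos: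
  assumes "1 \<le> j" and "2 * real j * pi \<le> K" and "K \<le> 2 * real j * pi + pi/3"
  shows "0 < reduced_char_fun K"
proof -
  define y where "y = K - 2 * real j * pi"
  have "cos (pi/3) \<le> cos y"
    using assms unfolding y_def by (intro cos_monotone_0_pi_le) auto
  then have cos: "1/2 \<le> cos K"
    using cos_add_2npi[of y j] y_def by (simp add: cos_60)
  have "2 * pi \<le> 2 * real j * pi"
    using assms(1) by simp
  then have "4 < cosh (sqrt 3 * K)"
    using assms(2) pi_gt_zero by (intro cosh_sqrt3_gt_4) linarith
  with cos have "2 / (cosh (sqrt 3 * K) + cos K) < 1/2"
    by (simp add: divide_less_eq)
  with cos show ?thesis
    unfolding reduced_char_fun_def by linarith
qed

lemma reduced_char_fun_decreasing:
  assumes "1 \<le> j" and "2 * real j * pi + pi/3 \<le> K1" and "K1 < K2"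
    and "K2 \<le> 2 * real j * pi + pi/2"
  shows "reduced_char_fun K2 < reduced_char_fun K1"
proof (rule DERIV_neg_imp_decreasing[OF \<open>K1 < K2\<close>])
  fix x assume x: "K1 \<le> x" "x \<le> K2"
  define y where "y = x - 2 * real j * pi"
  have y: "pi/3 \<le> y" "y \<le> pi/2"
    using x assms unfolding y_def by auto
  have "sin (pi/3) \<le> sin y"
    using y by (intro sin_monotone_2pi_le) auto
  then have sin: "sqrt 3 / 2 \<le> sin x"
    using sin_add_2npi[of y j] y_def by (simp add: sin_60)
  have "0 \<le> cos y"
    using y by (intro cos_ge_zero) auto
  then have cos: "0 \<le> cos x"
    using cos_add_2npi[of y j] y_def by simp
  have "2 * pi \<le> 2 * real j * pi"
    using assms(1) by simp
  then have "0 < x" "3/2*pi \<le> x"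
    using x assms(2) pi_gt_zero by linarith+
  define c where "c = cosh (sqrt 3 * x)"
  have c: "4 < c"
    unfolding c_def using \<open>3/2*pi \<le> x\<close> by (rule cosh_sqrt3_gt_4)
  define D where "D = (c + cos x)^2"
  have D: "c * c \<le> D"
    unfolding D_def power2_eq_square using cos c by (intro mult_mono) auto
  have "0 < c * c"
    using c by simp
  with D have "0 < D"
    by linarith
  have "0 < sin x"
    by (rule less_le_trans[OF _ sin]) simp
  have "4 * c < c * c"
    using c by simp
  have "2 * (sqrt 3 * sinh (sqrt 3 * x) - sin x) < 2 * (sqrt 3 * sinh (sqrt 3 * x))"
    using \<open>0 < sin x\<close> by simp
  also have "\<dots> \<le> 2 * (sqrt 3 * c)"
    unfolding c_def using sinh_le_cosh_real[of "sqrt 3 * x"] by simp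
  also have "\<dots> = sqrt 3 / 2 * (4 * c)"
    by simp
  also have "\<dots> < sqrt 3 / 2 * (c * c)"
    using \<open>4 * c < c * c\<close> by (intro mult_strict_left_mono) auto
  also have "\<dots> \<le> sqrt 3 / 2 * D"
    using D by (intro mult_left_mono) auto
  also have "\<dots> \<le> sin x * D"
    using sin \<open>0 < D\<close> by (intro mult_right_mono) auto
  finally have "2 * (sqrt 3 * sinh (sqrt 3 * x) - sin x) / D < sin x"
    using \<open>0 < D\<close> by (simp add: divide_less_eq)
  then have "- sin x + 2 * (sqrt 3 * sinh (sqrt 3 * x) - sin x) / (cosh (sqrt 3 * x) + cos x)^2 < 0"
    unfolding D_def c_def by simp
  moreover have "x \<noteq> 0"
    using \<open>0 < x\<close> by simp
  ultimately show "\<exists>y. (reduced_char_fun has_real_derivative y) (at x) \<and> y < 0"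
    using reduced_char_fun_deriv by blast
qed

lemma strict_mono_zero_unique:
  fixes f :: "real \<Rightarrow> real"
  assumes mono: "\<And>x y. a \<le> x \<Longrightarrow> x < y \<Longrightarrow> y \<le> b \<Longrightarrow> f x < f y"
    and "a \<le> x" "x \<le> b" "a \<le> y" "y \<le> b" "f x = 0" "f y = 0"
  shows "x = y"
  using mono[of x y] mono[of y x] assms(2-7) by (cases x y rule: linorder_cases) auto

lemma char_fun_unique_zero_below:
  assumes j: "1 \<le> j"
  shows "\<exists>!K. 2 * real j * pi - pi < K \<and> K < 2 * real j * pi \<and> char_fun K = 0"
proof -
  define a where "a = 2 * real j * pi"
  have "2*pi \<le> a"
    using j unfolding a_def by simp
  then have nz: "K \<noteq> 0" if "a - pi/2 \<le> K" for K
    using that pi_gt_zero by linarith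
  have neg: "reduced_char_fun (a - pi/2) < 0"
    using reduced_char_fun_neg_if_cos_0[OF nz] cos_2npi(2)[of j] unfolding a_def by simp
  have pos: "0 < reduced_char_fun a"
  proof -
    have "1 < cosh (sqrt 3 * a)"
      using nz[of a] by (intro cosh_sqrt3_gt_1) simp
    then have "2 / (cosh (sqrt 3 * a) + 1) < 1"
      by (simp add: divide_less_eq)
    moreover have "cos a = 1"
      unfolding a_def by (rule cos_2npi(1))
    ultimately show ?thesis
      unfolding reduced_char_fun_def by simp
  qed
  obtain x where x: "a - pi/2 \<le> x" "x \<le> a" "reduced_char_fun x = 0"
    using IVT[of reduced_char_fun "a - pi/2" 0 a] neg pos nz
      reduced_char_fun_deriv[THEN DERIV_isCont] by force
  then have x': "a - pi/2 < x" "x < a"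
    using neg pos by (auto simp: order_le_less)
  have far: "a - pi/2 < K" if "a - pi < K" "char_fun K = 0" for K
  proof (rule ccontr)
    assume "\<not> a - pi/2 < K"
    moreover have "2 * real (j - 1) * pi = a - 2*pi"
      using j unfolding a_def by (simp add: of_nat_diff algebra_simps)
    ultimately have "cos K \<le> 0"
      using cos_nonpos_2npi[of "j - 1" K] that by (simp add: algebra_simps)
    then show False
      using char_fun_pos_if_cos_nonpos that by fastforce
  qed
  show ?thesis
    unfolding a_def[symmetric]
  proof (rule ex1I[of _ x])
    show "a - pi < x \<and> x < a \<and> char_fun x = 0"
      using x x' char_fun_eq_0_iff[OF nz[of x]] by auto
  next
    fix K assume K: "a - pi < K \<and> K < a \<and> char_fun K = 0"
    then have "a - pi/2 < K"
      using far by blast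
    then have K': "a - pi/2 < K" "reduced_char_fun K = 0"
      using K char_fun_eq_0_iff[OF nz[OF less_imp_le]] by auto
    show "K = x"
      using strict_mono_zero_unique[where a = "a - pi/2" and b = a and f = reduced_char_fun
          and x = K and y = x] reduced_char_fun_increasing[OF j] K K' x
      unfolding a_def by auto
  qed
qed

lemma char_fun_unique_zero_above:
  assumes j: "1 \<le> j"
  shows "\<exists>!K. 2 * real j * pi < K \<and> K < 2 * real j * pi + pi \<and> char_fun K = 0"
proof -
  define a where "a = 2 * real j * pi"
  have "2*pi \<le> a"
    using j unfolding a_def by simp
  then have nz: "K \<noteq> 0" if "a \<le> K" for K
    using that pi_gt_zero by linarith
  have pos: "0 < reduced_char_fun (a + pi/3)"
    using reduced_char_fun_pos[OF j, of "a + pi/3"] unfolding a_def by simp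
  have neg: "reduced_char_fun (a + pi/2) < 0"
    using reduced_char_fun_neg_if_cos_0[OF nz] cos_2npi(3)[of j] unfolding a_def by simp
  obtain x where x: "a + pi/3 \<le> x" "x \<le> a + pi/2" "reduced_char_fun x = 0"
    using IVT2[of reduced_char_fun "a + pi/2" 0 "a + pi/3"] pos neg nz
      reduced_char_fun_deriv[THEN DERIV_isCont] by force
  then have x': "a + pi/3 < x" "x < a + pi/2"
    using pos neg by (auto simp: order_le_less)
  have near: "a + pi/3 < K \<and> K < a + pi/2" if "a < K" "K < a + pi" "char_fun K = 0" for K
  proof -
    have "K < a + pi/2"
    proof (rule ccontr)
      assume "\<not> K < a + pi/2"
      then have "cos K \<le> 0"
        using cos_nonpos_2npi[of j K] that unfolding a_def by simp
      then show False
        using char_fun_pos_if_cos_nonpos that by fastforce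
    qed
    moreover have "a + pi/3 < K"
    proof (rule ccontr)
      assume "\<not> a + pi/3 < K"
      then have "0 < reduced_char_fun K"
        using reduced_char_fun_pos[OF j, of K] that unfolding a_def by simp
      then show False
        using that char_fun_eq_0_iff[OF nz[of K]] by auto
    qed
    ultimately show ?thesis
      by blast
  qed
  show ?thesis
    unfolding a_def[symmetric]
  proof (rule ex1I[of _ x])
    show "a < x \<and> x < a + pi \<and> char_fun x = 0"
      using x x' char_fun_eq_0_iff[OF nz[of x]] by auto
  next
    fix K assume K: "a < K \<and> K < a + pi \<and> char_fun K = 0"
    then have K': "a + pi/3 < K" "K < a + pi/2" "reduced_char_fun K = 0"
      using near char_fun_eq_0_iff[OF nz[of K]] by auto
    have "- reduced_char_fun K1 < - reduced_char_fun K2"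
      if "a + pi/3 \<le> K1" "K1 < K2" "K2 \<le> a + pi/2" for K1 K2
      using reduced_char_fun_decreasing[OF j, of K1 K2] that unfolding a_def by simp
    then show "K = x"
      using strict_mono_zero_unique[where a = "a + pi/3" and b = "a + pi/2"
          and f = "\<lambda>K. - reduced_char_fun K" and x = K and y = x] K' x
      by auto
  qed
qed

lemma char_fun_unique_zero_odd:
  assumes "odd n" "3 \<le> n"
  shows "\<exists>!K. (real n - 1) * pi / 2 < K \<and> K < (real n + 1) * pi / 2 \<and> char_fun K = 0"
proof -
  obtain i where n: "n = 2*i + 1"
    using assms(1) by (metis oddE)
  show ?thesis
  proof (cases "even i")
    case True
    then obtain j where "i = 2*j"
      by (metis evenE)
    then have "1 \<le> j"
      using n assms(2) by simp
    have bounds: "(real n - 1) * pi / 2 = 2 * real j * pi" "(real n + 1) * pi / 2 = 2 * real j * pi + pi"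
      using n \<open>i = 2*j\<close> by (simp_all add: algebra_simps)
    show ?thesis
      unfolding bounds by (rule char_fun_unique_zero_above[OF \<open>1 \<le> j\<close>])
  next
    case False
    then obtain l where "i = 2*l + 1"
      by (metis oddE)
    then have bounds: "(real n - 1) * pi / 2 = 2 * real (l + 1) * pi - pi"
      "(real n + 1) * pi / 2 = 2 * real (l + 1) * pi"
      using n by (simp_all add: algebra_simps)
    show ?thesis
      unfolding bounds by (rule char_fun_unique_zero_below) simp
  qed
qed

lemma char_fun_npi_neq_0: "1 \<le> m \<Longrightarrow> char_fun (real m * pi) \<noteq> 0"
  using cosh_sqrt3_gt_1[of "real m * pi"] unfolding char_fun_def
  by (cases "even m") auto

lemma char_fun_zero_location:
  assumes "0 < K" and zero: "char_fun K = 0"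
  obtains n where "odd n" "3 \<le> n" "(real n - 1) * pi / 2 < K" "K < (real n + 1) * pi / 2"
proof -
  have "pi/2 < K"
    using char_fun_pos_near_0[OF \<open>0 < K\<close>] zero by force
  have "pi < K"
  proof (rule ccontr)
    assume "\<not> pi < K"
    then have "2 * real 0 * pi + pi/2 \<le> K" "K \<le> 2 * real 0 * pi + 3*pi/2"
      using \<open>pi/2 < K\<close> by simp_all
    then have "cos K \<le> 0"
      by (rule cos_nonpos_2npi)
    then have "0 < char_fun K"
      by (rule char_fun_pos_if_cos_nonpos)
    with zero show False
      by simp
  qed
  define r where "r = \<lfloor>K / pi\<rfloor>"
  have r: "of_int r \<le> K / pi" "K / pi < of_int r + 1"
    unfolding r_def by linarith+
  have "1 < K / pi"
    using \<open>pi < K\<close> by (simp add: field_simps)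
  then have "1 \<le> r"
    using r by linarith
  define m where "m = nat r"
  have m: "real m = of_int r" "1 \<le> m"
    unfolding m_def using \<open>1 \<le> r\<close> by simp_all
  have "real m * pi \<le> K" "K < (real m + 1) * pi"
    using r pi_gt_zero unfolding m(1) by (simp_all add: field_simps)
  moreover have "real m * pi \<noteq> K"
    using char_fun_npi_neq_0[OF \<open>1 \<le> m\<close>] zero by auto
  ultimately have "real m * pi < K" "K < (real m + 1) * pi"
    by simp_all
  then show thesis
    using \<open>1 \<le> m\<close> by (intro that[of "2*m + 1"]) (simp_all add: algebra_simps)
qed

section \<open>The eigenvalues and their asymptotics\<close>

text \<open>Only meaningful for odd n \<ge> 3; otherwise THE yields an unspecified value.\<close>
definition odd_zero :: "nat \<Rightarrow> real" where
  "odd_zero n = (THE K. (real n - 1) * pi / 2 < K \<and> K < (real n + 1) * pi / 2 \<and> char_fun K = 0)"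

lemma odd_zero:
  assumes "odd n" "3 \<le> n"
  shows "(real n - 1) * pi / 2 < odd_zero n" "odd_zero n < (real n + 1) * pi / 2"
    "char_fun (odd_zero n) = 0"
  using theI'[OF char_fun_unique_zero_odd[OF assms]] unfolding odd_zero_def by auto

lemma odd_zero_unique:
  assumes "odd n" "3 \<le> n" "(real n - 1) * pi / 2 < K" "K < (real n + 1) * pi / 2" "char_fun K = 0"
  shows "K = odd_zero n"
  unfolding odd_zero_def using assms
  by (intro the1_equality[OF char_fun_unique_zero_odd, symmetric]) auto

lemma char_fun_odd_half_npi: "odd n \<Longrightarrow> char_fun (real n * pi / 2) = 2"
proof -
  assume "odd n"
  then obtain i where "n = 2*i + 1"
    by (metis oddE)
  then have half: "real n * pi / 2 = pi/2 + real i * pi"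
    by (simp add: algebra_simps)
  have "cos (real n * pi / 2) = 0"
    unfolding half cos_add by simp
  moreover from this have "sin (real n * pi / 2) ^ 2 = 1"
    using sin_squared_eq[of "real n * pi / 2"] by simp
  ultimately show ?thesis
    unfolding char_fun_def by simp
qed

lemma odd_zero_neq:
  assumes "odd n" "3 \<le> n"
  shows "odd_zero n \<noteq> real n * pi / 2"
proof
  assume half: "odd_zero n = real n * pi / 2"
  have "char_fun (odd_zero n) = 2"
    unfolding half by (rule char_fun_odd_half_npi[OF assms(1)])
  with odd_zero(3)[OF assms] show False
    by simp
qed

definition eigen_root :: "nat \<Rightarrow> real" where
  "eigen_root n = (if even n then real n * pi else 2 * odd_zero n)"

lemma eigen_root_odd_bounds:
  "odd n \<Longrightarrow> 3 \<le> n \<Longrightarrow> (real n - 1) * pi < eigen_root n \<and> eigen_root n < (real n + 1) * pi"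
  using odd_zero[of n] unfolding eigen_root_def by simp

lemma eigen_root_pos:
  assumes "2 \<le> n"
  shows "0 < eigen_root n"
proof (cases "even n")
  case True
  with assms show ?thesis
    unfolding eigen_root_def by simp
next
  case False
  with assms have "3 \<le> n"
    by presburger
  with False have "(real n - 1) * pi < eigen_root n"
    using eigen_root_odd_bounds by blast
  moreover have "0 \<le> (real n - 1) * pi"
    using \<open>3 \<le> n\<close> by simp
  ultimately show ?thesis
    by linarith
qed

lemma eigen_root_strict_mono: "2 \<le> n \<Longrightarrow> eigen_root n < eigen_root (Suc n)"
proof (cases "even n")
  case True
  moreover assume "2 \<le> n"
  ultimately have "(real (Suc n) - 1) * pi < eigen_root (Suc n)"
    using eigen_root_odd_bounds[of "Suc n"] by simp
  with True show ?thesis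
    unfolding eigen_root_def by simp
next
  case False
  moreover assume "2 \<le> n"
  ultimately have "3 \<le> n"
    by presburger
  with False have "eigen_root n < (real n + 1) * pi"
    using eigen_root_odd_bounds by blast
  with False show ?thesis
    unfolding eigen_root_def by (simp add: algebra_simps)
qed

lemma eigen_root_eq_npi_iff:
  assumes "2 \<le> n"
  shows "eigen_root n = real n * pi \<longleftrightarrow> even n"
proof (cases "even n")
  case False
  with assms have "3 \<le> n"
    by presburger
  have "eigen_root n = 2 * odd_zero n"
    using False unfolding eigen_root_def by simp
  with odd_zero_neq[OF False \<open>3 \<le> n\<close>] False show ?thesis
    by auto
qed (simp add: eigen_root_def)

lemma eigen_root_if_sixth_order_eigenvalue:
  assumes "sixth_order_eigenvalue \<mu>"
  obtains n where "2 \<le> n" "\<mu> = eigen_root n ^ 6"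
proof -
  obtain k where k: "0 < k" "\<mu> = k^6" and "sin (k/2) = 0 \<or> char_fun (k/2) = 0"
    using assms unfolding sixth_order_eigenvalue_iff by blast
  then consider "sin (k/2) = 0" | "char_fun (k/2) = 0"
    by blast
  then obtain n where n: "2 \<le> n" "k = eigen_root n"
  proof cases
    case 1
    then obtain i :: int where i: "k/2 = of_int i * pi"
      using sin_zero_iff_int2 by blast
    with k(1) have "0 < i"
      by (simp add: zero_less_mult_iff)
    then have "2 \<le> 2 * nat i" "k = real (2 * nat i) * pi"
      using i by simp_all
    then show ?thesis
      using that[of "2 * nat i"] unfolding eigen_root_def by simp
  next
    case 2
    have "0 < k/2"
      using k(1) by simp
    then obtain n where n: "odd n" "3 \<le> n" "(real n - 1) * pi / 2 < k/2" "k/2 < (real n + 1) * pi / 2"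
      using 2 by (rule char_fun_zero_location)
    then have "k/2 = odd_zero n"
      using 2 by (intro odd_zero_unique) auto
    then show ?thesis
      using that[of n] n unfolding eigen_root_def by simp
  qed
  then show thesis
    using that[OF n(1)] k(2) by simp
qed

lemma sixth_order_eigenvalue_eigen_root:
  assumes "2 \<le> n"
  shows "sixth_order_eigenvalue (eigen_root n ^ 6)"
proof -
  have "sin (eigen_root n / 2) = 0 \<or> char_fun (eigen_root n / 2) = 0"
  proof (cases "even n")
    case True
    then obtain m where "n = 2*m"
      by (metis evenE)
    then show ?thesis
      unfolding eigen_root_def by simp
  next
    case False
    with assms have "3 \<le> n"
      by presburger
    with False show ?thesis
      using odd_zero(3)[of n] unfolding eigen_root_def by simp
  qed
  then show ?thesis
    using eigen_root_pos[OF assms] unfolding sixth_order_eigenvalue_iff by auto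
qed

lemma sixth_order_eigenvalues: "{\<mu>. sixth_order_eigenvalue \<mu>} = (\<lambda>n. eigen_root n ^ 6) ` {2..}"
proof (intro equalityI subsetI)
  fix \<mu> assume "\<mu> \<in> {\<mu>. sixth_order_eigenvalue \<mu>}"
  then have "sixth_order_eigenvalue \<mu>"
    by simp
  then obtain n where "2 \<le> n" "\<mu> = eigen_root n ^ 6"
    by (rule eigen_root_if_sixth_order_eigenvalue)
  then show "\<mu> \<in> (\<lambda>n. eigen_root n ^ 6) ` {2..}"
    by auto
next
  fix \<mu> assume "\<mu> \<in> (\<lambda>n. eigen_root n ^ 6) ` {2..}"
  then show "\<mu> \<in> {\<mu>. sixth_order_eigenvalue \<mu>}"
    using sixth_order_eigenvalue_eigen_root by auto
qed

lemma eigen_root_pow_strict_mono: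
  assumes "2 \<le> n"
  shows "eigen_root n ^ 6 < eigen_root (Suc n) ^ 6"
  using eigen_root_strict_mono[OF assms] less_imp_le[OF eigen_root_pos[OF assms]]
  by (rule power_strict_mono) simp

lemma root_eigen_root_pow: "2 \<le> n \<Longrightarrow> root 6 (eigen_root n ^ 6) = eigen_root n"
  using eigen_root_pos[of n] by (simp add: real_root_power_cancel)

text \<open>Write \<open>K = odd_zero n = n pi/2 + d\<close> with n = 2i + 3. Then cos K = (-1)^i sin d, and
  char_fun K = 0 says \<open>sin d = 2 (-1)^i / (cosh (sqrt 3 K) + cos K)\<close>, which is of order
  \<open>exp (- sqrt 3 K)\<close>.\<close>
lemma odd_zero_offset:
  fixes i :: nat
  defines "n \<equiv> 2 * i + 3"
  defines "K \<equiv> odd_zero n"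
  defines "d \<equiv> K - real n * pi / 2"
  shows "- (pi/2) < d" "d < pi/2" "d \<noteq> 0"
    and "sin d * (cosh (sqrt 3 * K) + cos K) = 2 * (-1)^i"
proof -
  have n: "odd n" "3 \<le> n"
    unfolding n_def by auto
  show "- (pi/2) < d" "d < pi/2"
    using odd_zero(1,2)[OF n] unfolding d_def K_def by (simp_all add: field_simps)
  show "d \<noteq> 0"
    using odd_zero_neq[OF n] unfolding d_def K_def by simp
  define s :: real where "s = (-1)^i"
  define X where "X = cosh (sqrt 3 * K) + cos K"
  have K: "K = (d + pi/2) + real (i + 1) * pi"
    unfolding d_def n_def by (simp add: algebra_simps)
  have "cos (real (i + 1) * pi) = (-1)^(i + 1)" "sin (real (i + 1) * pi) = 0"
    by (rule cos_npi, rule sin_npi)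
  then have "cos K = (-1)^(i + 1) * cos (d + pi/2)"
    unfolding K cos_add[of "d + pi/2"] by simp
  also have "cos (d + pi/2) = - sin d"
    by (simp add: cos_add)
  finally have cos_K: "cos K = s * sin d"
    unfolding s_def by simp
  have "cos K * X = 2"
    using odd_zero(3)[OF n] char_fun_eq[of K] unfolding X_def K_def by simp
  have "s * s = 1"
    unfolding s_def by (simp add: power_mult_distrib[symmetric])
  then have "sin d * X = (s * s) * (sin d * X)"
    by simp
  also have "\<dots> = s * (cos K * X)"
    unfolding cos_K by (simp only: mult_ac)
  also have "\<dots> = 2 * s"
    using \<open>cos K * X = 2\<close> by simp
  finally show "sin d * (cosh (sqrt 3 * K) + cos K) = 2 * (-1)^i"
    unfolding X_def s_def .
qed

lemma cosh_plus_cos_odd_zero_ge: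
  fixes i :: nat
  defines "n \<equiv> 2 * i + 3"
  defines "K \<equiv> odd_zero n"
  shows "real (Suc i) \<le> cosh (sqrt 3 * K) + cos K"
proof -
  have n: "odd n" "3 \<le> n"
    unfolding n_def by auto
  have "(real n - 1) * pi / 2 = real (Suc i) * pi"
    unfolding n_def by (simp add: algebra_simps)
  moreover have "real (Suc i) * 3 \<le> real (Suc i) * pi"
    using pi_gt3 by (intro mult_left_mono) auto
  ultimately have "3 * real (Suc i) \<le> K"
    using odd_zero(1)[OF n] unfolding K_def by linarith
  define a where "a = sqrt 3 * K"
  have "K \<le> a"
    using mult_right_mono[of 1 "sqrt 3" K] \<open>3 * real (Suc i) \<le> K\<close> unfolding a_def by simp
  moreover have "1 + a \<le> 2 * cosh a"
  proof -
    have "exp a \<le> 2 * cosh a"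
      unfolding cosh_field_def by simp
    then show ?thesis
      by (rule order_trans[OF exp_ge_add_one_self])
  qed
  moreover have "1 \<le> real (Suc i)"
    by simp
  ultimately show "real (Suc i) \<le> cosh (sqrt 3 * K) + cos K"
    using cos_ge_minus_one[of K] \<open>3 * real (Suc i) \<le> K\<close> unfolding a_def[symmetric]
    by (smt (verit))
qed

lemma odd_zero_offset_tendsto_0:
  "(\<lambda>i. odd_zero (2 * i + 3) - real (2 * i + 3) * pi / 2) \<longlonglongrightarrow> 0" (is "?d \<longlonglongrightarrow> 0")
proof -
  have bound: "\<bar>sin (?d i)\<bar> \<le> 2 * inverse (real (Suc i))" for i
  proof -
    define \<delta> where "\<delta> = ?d i"
    define X where "X = cosh (sqrt 3 * odd_zero (2 * i + 3)) + cos (odd_zero (2 * i + 3))"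
    have X: "real (Suc i) \<le> X"
      unfolding X_def by (rule cosh_plus_cos_odd_zero_ge)
    then have "0 < X"
      by (smt (verit) of_nat_0_less_iff zero_less_Suc)
    have "sin \<delta> * X = 2 * (-1)^i"
      unfolding \<delta>_def X_def by (rule odd_zero_offset(4))
    then have "\<bar>sin \<delta> * X\<bar> = \<bar>2 * (-1::real)^i\<bar>"
      by (rule arg_cong)
    then have "\<bar>sin \<delta>\<bar> * X = 2"
      using \<open>0 < X\<close> by (simp add: abs_mult power_abs)
    then have "\<bar>sin \<delta>\<bar> = 2 / X"
      using \<open>0 < X\<close> by (simp add: eq_divide_eq)
    also have "\<dots> \<le> 2 / real (Suc i)"
      using X by (intro divide_left_mono) auto
    also have "\<dots> = 2 * inverse (real (Suc i))"
      by (rule divide_inverse)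
    finally show ?thesis
      unfolding \<delta>_def .
  qed
  have "(\<lambda>i. 2 * inverse (real (Suc i))) \<longlonglongrightarrow> 0"
    using tendsto_mult_right_zero[OF LIMSEQ_inverse_real_of_nat, of 2] by simp
  then have "(\<lambda>i. sin (?d i)) \<longlonglongrightarrow> 0"
    by (rule Lim_null_comparison[rotated]) (use bound in auto)
  then have "(\<lambda>i. arcsin (sin (?d i))) \<longlonglongrightarrow> arcsin 0"
    by (intro isCont_tendsto_compose[OF isCont_arcsin]) auto
  moreover have "arcsin (sin (?d i)) = ?d i" for i
    using odd_zero_offset(1,2)[of i] by (intro arcsin_sin) auto
  ultimately show ?thesis
    by simp
qed

lemma eigen_root_offset_ratio:
  fixes i :: nat
  defines "n \<equiv> 2 * i + 3"
  defines "K \<equiv> odd_zero n"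
  defines "d \<equiv> K - real n * pi / 2"
  defines "E \<equiv> exp (- (pi * sqrt 3 / 2) * real n)"
  shows "(eigen_root n - real n * pi) / (8 * (-1) ^ (nat \<lfloor>real n / 2\<rfloor> + 1) * E)
          = (d / sin d) / (exp (sqrt 3 * d) + E^2 * exp (- (sqrt 3 * d)) + 2 * E * cos K)"
proof -
  define s :: real where "s = (-1)^i"
  define X where "X = cosh (sqrt 3 * K) + cos K"
  have "s * s = 1"
    unfolding s_def by (simp add: power_mult_distrib[symmetric])
  have "\<lfloor>real n / 2\<rfloor> = int i + 1"
    unfolding n_def by (simp add: floor_eq_iff)
  then have "nat \<lfloor>real n / 2\<rfloor> + 1 = i + 2"
    by simp
  then have sign: "(-1::real) ^ (nat \<lfloor>real n / 2\<rfloor> + 1) = s"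
    unfolding s_def by simp
  have "odd n"
    unfolding n_def by simp
  then have "eigen_root n - real n * pi = 2 * d"
    unfolding eigen_root_def d_def K_def by simp
  moreover have "sin d * X = 2 * s"
    using odd_zero_offset(4)[of i] unfolding X_def s_def d_def K_def n_def .
  moreover have "0 < X" "0 < E"
    using cosh_plus_cos_odd_zero_ge[of i] unfolding X_def K_def n_def E_def by simp_all
  ultimately have "(eigen_root n - real n * pi) / (8 * (-1) ^ (nat \<lfloor>real n / 2\<rfloor> + 1) * E)
      = (d / sin d) / (2 * E * X)"
    unfolding sign using \<open>s * s = 1\<close> by (auto simp: field_simps)
  moreover have "sqrt 3 * K = (pi * sqrt 3 / 2) * real n + sqrt 3 * d"
    unfolding d_def by (simp add: algebra_simps)
  then have "2 * E * X = exp (sqrt 3 * d) + E^2 * exp (- (sqrt 3 * d)) + 2 * E * cos K"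
    unfolding X_def cosh_field_def E_def power2_eq_square
    by (simp add: algebra_simps exp_add[symmetric])
  ultimately show ?thesis
    by simp
qed

lemma eigen_root_offset_asymptotics:
  "(\<lambda>k. (eigen_root (2 * k + 3) - real (2 * k + 3) * pi) /
      (8 * (-1) ^ (nat \<lfloor>real (2 * k + 3) / 2\<rfloor> + 1) * exp (- (pi * sqrt 3 / 2) * real (2 * k + 3))))
    \<longlonglongrightarrow> 1"
proof -
  define d where "d i = odd_zero (2 * i + 3) - real (2 * i + 3) * pi / 2" for i
  define E where "E i = exp (- (pi * sqrt 3 / 2) * real (2 * i + 3))" for i
  have d: "d \<longlonglongrightarrow> 0"
    unfolding d_def by (rule odd_zero_offset_tendsto_0)
  have "filterlim d (at 0) sequentially"
    using d odd_zero_offset(3) unfolding d_def by (simp add: filterlim_at)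
  moreover have "((\<lambda>h. sin h / h) \<longlongrightarrow> 1) (at (0::real))"
    using DERIV_sin[of 0] unfolding DERIV_def by simp
  ultimately have "(\<lambda>i. sin (d i) / d i) \<longlonglongrightarrow> 1"
    by (rule filterlim_compose[rotated])
  from tendsto_inverse[OF this] have "(\<lambda>i. d i / sin (d i)) \<longlonglongrightarrow> 1"
    by simp
  moreover have E: "E \<longlonglongrightarrow> 0"
  proof (rule Lim_null_comparison[OF _ LIMSEQ_inverse_real_of_nat])
    have "real (Suc i) \<le> exp ((pi * sqrt 3 / 2) * real (2 * i + 3))" for i
    proof -
      have "1 \<le> pi * sqrt 3 / 2"
        using pi_gt3 mult_mono[of 3 pi 1 "sqrt 3"] by simp
      then have "real (Suc i) \<le> (pi * sqrt 3 / 2) * real (2 * i + 3)"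
        using mult_right_mono[of 1 "pi * sqrt 3 / 2" "real (2 * i + 3)"] by simp
      then show ?thesis
        using exp_ge_add_one_self[of "(pi * sqrt 3 / 2) * real (2 * i + 3)"] by linarith
    qed
    then show "\<forall>\<^sub>F i in sequentially. norm (E i) \<le> inverse (real (Suc i))"
      unfolding E_def by (simp add: exp_minus le_imp_inverse_le)
  qed
  moreover have "(\<lambda>i. 2 * E i * cos (odd_zero (2 * i + 3))) \<longlonglongrightarrow> 0"
  proof (rule Lim_null_comparison)
    show "\<forall>\<^sub>F i in sequentially. norm (2 * E i * cos (odd_zero (2 * i + 3))) \<le> 2 * E i"
      unfolding E_def by (simp add: abs_mult)
    show "(\<lambda>i. 2 * E i) \<longlonglongrightarrow> 0"
      using tendsto_mult_right_zero[OF E, of 2] by simp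
  qed
  ultimately have "(\<lambda>i. (d i / sin (d i)) / (exp (sqrt 3 * d i) + E i ^ 2 * exp (- (sqrt 3 * d i))
      + 2 * E i * cos (odd_zero (2 * i + 3)))) \<longlonglongrightarrow> 1 / (exp (sqrt 3 * 0) + 0^2 * exp (- (sqrt 3 * 0)) + 0)"
    by (intro tendsto_intros d) simp_all
  then show ?thesis
    using eigen_root_offset_ratio unfolding d_def E_def by simp
qed

theorem theorem1p1:
  shows "\<exists>(lam :: nat \<Rightarrow> real) (\<delta> :: nat \<Rightarrow> real).
     (\<forall>n\<ge>2. lam n < lam (Suc n)) \<and>
     {\<mu>. sixth_order_eigenvalue \<mu>} = lam ` {2..} \<and>
     (\<forall>n\<ge>2. even n \<longrightarrow> lam n = (real n * pi) ^ 6) \<and>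
     (\<forall>n\<ge>3. odd n \<longrightarrow> lam n = (real n * pi + \<delta> n) ^ 6 \<and> \<delta> n \<noteq> 0) \<and>
     ((\<lambda>k. \<delta> (2 * k + 3) /
        (8 * (-1) ^ (nat \<lfloor>real (2 * k + 3) / 2\<rfloor> + 1) *
         exp (- (pi * sqrt 3 / 2) * real (2 * k + 3)))) \<longlonglongrightarrow> 1) \<and>
     (\<forall>n\<ge>2. root 6 (lam n) = real n * pi \<longleftrightarrow> even n)"
proof (rule exI[of _ "\<lambda>n. eigen_root n ^ 6"], rule exI[of _ "\<lambda>n. eigen_root n - real n * pi"],
    intro conjI allI impI)
  fix n :: nat
  assume "2 \<le> n"
  then show "eigen_root n ^ 6 < eigen_root (Suc n) ^ 6"
    by (rule eigen_root_pow_strict_mono)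
next
  show "{\<mu>. sixth_order_eigenvalue \<mu>} = (\<lambda>n. eigen_root n ^ 6) ` {2..}"
    by (rule sixth_order_eigenvalues)
next
  fix n :: nat
  assume "2 \<le> n" "even n"
  then show "eigen_root n ^ 6 = (real n * pi) ^ 6"
    by (simp add: eigen_root_def)
next
  fix n :: nat
  assume "3 \<le> n" "odd n"
  then show "eigen_root n ^ 6 = (real n * pi + (eigen_root n - real n * pi)) ^ 6"
    and "eigen_root n - real n * pi \<noteq> 0"
    using eigen_root_eq_npi_iff[of n] by simp_all
next
  show "(\<lambda>k. (eigen_root (2 * k + 3) - real (2 * k + 3) * pi) /
      (8 * (-1) ^ (nat \<lfloor>real (2 * k + 3) / 2\<rfloor> + 1) * exp (- (pi * sqrt 3 / 2) * real (2 * k + 3))))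
    \<longlonglongrightarrow> 1"
    by (rule eigen_root_offset_asymptotics)
next
  fix n :: nat
  assume "2 \<le> n"
  then show "root 6 (eigen_root n ^ 6) = real n * pi \<longleftrightarrow> even n"
    using root_eigen_root_pow eigen_root_eq_npi_iff by simp
qed

end
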